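(* Let $(S_n^{(1)},S_n^{(2)})_{n\ge0}$ be a two-elephant walking model with $\alpha_1\alpha_2\ne0$ and $\lambda_\alpha\ne\pm1$. Then for every $n\ge1$, $$x_n=\beta_n(\lambda_\alpha)\Big(x_1+\sum_{j=1}^{n-1}\frac{\gamma_j(\lambda_\alpha)}{\beta_{j+1}(\lambda_\alpha)}\varepsilon^{(x)}_{j+1}\Big),\qquad y_n=\beta_n(-\lambda_\alpha)\Big(y_1+\sum_{j=1}^{n-1}\frac{\gamma_j(-\lambda_\alpha)}{\beta_{j+1}(-\lambda_\alpha)}\varepsilon^{(y)}_{j+1}\Big),$$ and $(\varepsilon^{(x)}_{j+1})_{j\ge1}$, $(\varepsilon^{(y)}_{j+1})_{j\ge1}$ are martingale difference sequences with respect to $(\mathcal F_{j+1})_{j\ge1}$.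
   Context: Two-elephant walking model: fix $p_1,p_2\in[0,1]$, $\alpha_i=2p_i-1$. Let $(\xi_n^{(1)})_{n\ge2}$ be i.i.d. Bernoulli($p_1$), $(\xi_n^{(2)})_{n\ge2}$ i.i.d. Bernoulli($p_2$), $(u_n^{(1)})_{n\ge1}$, $(u_n^{(2)})_{n\ge1}$ independent with $u_n^{(i)}$ uniform on $\{1,\dots,n\}$, all mutually independent. $S_0^{(i)}=0$, $X_1^{(1)},X_1^{(2)}\in\{-1,1\}$ given, and for $n\ge1$: $X_{n+1}^{(1)}:=(2\xi^{(1)}_{n+1}-1)X^{(2)}_{u_n^{(2)}}$, $X_{n+1}^{(2)}:=(2\xi^{(2)}_{n+1}-1)X^{(1)}_{u_n^{(1)}}$, $S_n^{(i)}=\sum_{k\le n}X_k^{(i)}$; $\mathcal F_n:=\sigma(X_j^{(i)}:1\le j\le n,\ i=1,2)$. Notation: $\lambda_\alpha:=\operatorname{sgn}(\alpha_2)\sqrt{\alpha_1\alpha_2}$ if $\alpha_1\alpha_2>0$ and $\lambda_\alpha:=\mathrm i\operatorname{sgn}(\alpha_2)\sqrt{-\alpha_1\alpha_2}$ if $\alpha_1\alpha_2<0$; $r_\alpha:=\sqrt{\alpha_1/\alpha_2}$ if $\alpha_1\alpha_2>0$ and $r_\alpha:=\mathrm i\sqrt{-\alpha_1/\alpha_2}$ if $\alpha_1\alpha_2<0$. For $n\ge1$: $\gamma_n(\pm\lambda_\alpha):=\frac{1\pm\lambda_\alpha}{n+1}$, $\beta_n(\pm\lambda_\alpha):=\prod_{k=1}^{n-1}(1-\gamma_k(\pm\lambda_\alpha))=\frac{\Gamma(n\mp\lambda_\alpha)}{\Gamma(1\mp\lambda_\alpha)\Gamma(n+1)}$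 (with $\beta_1=1$); $x_n:=\frac{S_n^{(1)}-r_\alpha S_n^{(2)}}{n}$, $y_n:=\frac{S_n^{(1)}+r_\alpha S_n^{(2)}}{n}$; and for $j\ge1$ $$\varepsilon^{(x)}_{j+1}:=\frac{1}{1+\lambda_\alpha}\big(X^{(1)}_{j+1}-r_\alpha X^{(2)}_{j+1}+\lambda_\alpha x_j\big),\qquad \varepsilon^{(y)}_{j+1}:=\frac{1}{1-\lambda_\alpha}\big(X^{(1)}_{j+1}+r_\alpha X^{(2)}_{j+1}-\lambda_\alpha y_j\big).$$ *)

theory Defs
  imports "HOL-Probability.Probability"
begin

text \<open>Sign of a Bernoulli step: 2 xi - 1 for xi in {0,1} (xi encoded as bool).\<close>
definition sgnb :: "bool \<Rightarrow> int" where
  "sgnb b = (if b then 1 else -1)"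

text \<open>Pathwise construction of the steps (X^(1)_k, X^(2)_k), k \<ge> 1, from the
  initial steps a = X^(1)_1, b = X^(2)_1, the coins xi^(1)_n, xi^(2)_n (n \<ge> 2) and
  the memory indices u^(1)_n, u^(2)_n (n \<ge> 1):
  X^(1)_{n+1} = (2 xi^(1)_{n+1} - 1) X^(2)_{u^(2)_n},
  X^(2)_{n+1} = (2 xi^(2)_{n+1} - 1) X^(1)_{u^(1)_n}.
  The index u_n is clamped to at most n (which changes nothing when u_n is in {1..n},
  i.e. almost surely); index 0 gives the dummy value (0,0).\<close>
function elephant ::
  "int \<Rightarrow> int \<Rightarrow> (nat \<Rightarrow> bool) \<Rightarrow> (nat \<Rightarrow> bool) \<Rightarrow> (nat \<Rightarrow> nat) \<Rightarrow> (nat \<Rightarrow> nat) \<Rightarrow> nat \<Rightarrow> int \<times> int"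
where
  "elephant a b x1 x2 v1 v2 0 = (0, 0)"
| "elephant a b x1 x2 v1 v2 (Suc 0) = (a, b)"
| "elephant a b x1 x2 v1 v2 (Suc (Suc n)) =
     (sgnb (x1 (Suc (Suc n))) * snd (elephant a b x1 x2 v1 v2 (min (v2 (Suc n)) (Suc n))),
      sgnb (x2 (Suc (Suc n))) * fst (elephant a b x1 x2 v1 v2 (min (v1 (Suc n)) (Suc n))))"
  by pat_completeness auto
termination
  by (relation "Wellfounded.measure (\<lambda>(a, b, x1, x2, v1, v2, n). n)") auto

definition walkX ::
  "int \<Rightarrow> int \<Rightarrow> (nat \<Rightarrow> 'a \<Rightarrow> bool) \<Rightarrow> (nat \<Rightarrow> 'a \<Rightarrow> bool) \<Rightarrow> (nat \<Rightarrow> 'a \<Rightarrow> nat) \<Rightarrow> (nat \<Rightarrow> 'a \<Rightarrow> nat)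
   \<Rightarrow> nat \<Rightarrow> 'a \<Rightarrow> int \<times> int" where
  "walkX a b xi1 xi2 u1 u2 k \<omega> =
     elephant a b (\<lambda>n. xi1 n \<omega>) (\<lambda>n. xi2 n \<omega>) (\<lambda>n. u1 n \<omega>) (\<lambda>n. u2 n \<omega>) k"

datatype src = Xi1 nat | Xi2 nat | U1 nat | U2 nat

definition src_index :: "src set" where
  "src_index = {Xi1 n | n. n \<ge> 2} \<union> {Xi2 n | n. n \<ge> 2} \<union> {U1 n | n. n \<ge> 1} \<union> {U2 n | n. n \<ge> 1}"

definition src_var ::
  "(nat \<Rightarrow> 'a \<Rightarrow> bool) \<Rightarrow> (nat \<Rightarrow> 'a \<Rightarrow> bool) \<Rightarrow> (nat \<Rightarrow> 'a \<Rightarrow> nat) \<Rightarrow> (nat \<Rightarrow> 'a \<Rightarrow> nat)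
   \<Rightarrow> src \<Rightarrow> 'a \<Rightarrow> bool + nat" where
  "src_var xi1 xi2 u1 u2 s = (case s of
      Xi1 n \<Rightarrow> (\<lambda>\<omega>. Inl (xi1 n \<omega>))
    | Xi2 n \<Rightarrow> (\<lambda>\<omega>. Inl (xi2 n \<omega>))
    | U1 n \<Rightarrow> (\<lambda>\<omega>. Inr (u1 n \<omega>))
    | U2 n \<Rightarrow> (\<lambda>\<omega>. Inr (u2 n \<omega>)))"

definition nat_filt :: "'a measure \<Rightarrow> (nat \<Rightarrow> 'a \<Rightarrow> 'b) \<Rightarrow> nat \<Rightarrow> 'a measure" where
  "nat_filt M X n = sigma (space M) (\<Union>j\<in>{1..n}. {X j -` A \<inter> space M | A. True})"

definition lambda_alpha :: "real \<Rightarrow> real \<Rightarrow> complex" where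
  "lambda_alpha a1 a2 =
     (if a1 * a2 > 0 then complex_of_real (sgn a2 * sqrt (a1 * a2))
      else \<i> * complex_of_real (sgn a2 * sqrt (- (a1 * a2))))"

definition r_alpha :: "real \<Rightarrow> real \<Rightarrow> complex" where
  "r_alpha a1 a2 =
     (if a1 * a2 > 0 then complex_of_real (sqrt (a1 / a2))
      else \<i> * complex_of_real (sqrt (- (a1 / a2))))"

definition gam :: "complex \<Rightarrow> nat \<Rightarrow> complex" where
  "gam z n = (1 + z) / (of_nat n + 1)"

definition bet :: "complex \<Rightarrow> nat \<Rightarrow> complex" where
  "bet z n = (\<Prod>k=1..<n. 1 - gam z k)"

definition mds :: "'a measure \<Rightarrow> (nat \<Rightarrow> 'a measure) \<Rightarrow> (nat \<Rightarrow> 'a \<Rightarrow> complex) \<Rightarrow> bool" where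
  "mds M F e \<longleftrightarrow> (\<forall>j\<ge>1.
      e (j+1) \<in> borel_measurable (F (j+1)) \<and> integrable M (e (j+1)) \<and>
      (AE \<omega> in M. real_cond_exp M (F j) (\<lambda>\<omega>. Re (e (j+1) \<omega>)) \<omega> = 0) \<and>
      (AE \<omega> in M. real_cond_exp M (F j) (\<lambda>\<omega>. Im (e (j+1) \<omega>)) \<omega> = 0))"

end

theory Submission
  imports Defs
begin

(*
  The processes x_n and y_n are running means (1/n) (w_1 + ... + w_n) of the combined steps
  w_k = X1_k - r X2_k and w_k = X1_k + r X2_k.  Any running mean m_n satisfies, for every z <> -1,
    m_(n+1) = (1 - gamma_n(z)) m_n + gamma_n(z) (w_(n+1) + z m_n) / (1 + z),
  and iterating this affine recursion gives the closed form with beta_n(z) = prod (1 - gamma_k(z)).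

  For the martingale property, the step X1_(n+1) = (2 xi - 1) X2_(u_n) copies a uniformly chosen past
  step of the other elephant, with a sign that is independent of the past, so
  E[X1_(n+1) | F_n] = alpha_1 S2_n / n; the identity E[X2_(n+1) | F_n] = alpha_2 S1_n / n is the
  same statement for the model with the two elephants exchanged.
  Since lambda r = alpha_1 and lambda = r alpha_2, eps^(x)_(n+1) is exactly (X1_(n+1) - r X2_(n+1))
  minus its conditional mean -lambda x_n, divided by 1 + lambda; eps^(y) is the same with
  (lambda, r) replaced by (-lambda, -r).
*)

section \<open>Measurability and independence\<close>

lemma (in prob_space) indep_sets_reindex:
  assumes inj: "inj_on f I" and indep: "indep_sets F (f ` I)"
  shows "indep_sets (\<lambda>i. F (f i)) I"
  unfolding indep_sets_def
proof (intro conjI ballI allI impI)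
  fix i assume "i \<in> I"
  then show "F (f i) \<subseteq> events" using indep by (auto simp: indep_sets_def)
next
  fix J A assume J: "J \<subseteq> I" "J \<noteq> {}" "finite J" and A: "A \<in> Pi J (\<lambda>i. F (f i))"
  have inj_J: "inj_on f J" using inj J(1) by (rule inj_on_subset)
  define A' where "A' = A \<circ> the_inv_into J f"
  have A'_f: "A' (f j) = A j" if "j \<in> J" for j
    using the_inv_into_f_f[OF inj_J that] by (simp add: A'_def)
  have "A' \<in> Pi (f ` J) F" using A by (auto simp: A'_f)
  moreover have "f ` J \<subseteq> f ` I" "f ` J \<noteq> {}" "finite (f ` J)" using J by auto
  ultimately have "prob (\<Inter>j\<in>f ` J. A' j) = (\<Prod>j\<in>f ` J. prob (A' j))"
    using indep unfolding indep_sets_def by blast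
  then show "prob (\<Inter>j\<in>J. A j) = (\<Prod>j\<in>J. prob (A j))"
    by (simp add: prod.reindex[OF inj_J] A'_f)
qed

lemma (in prob_space) indep_vars_reindex:
  assumes "inj_on f I" and "indep_vars M' X (f ` I)"
  shows "indep_vars (\<lambda>i. M' (f i)) (\<lambda>i. X (f i)) I"
  using assms indep_sets_reindex[OF assms(1), of "\<lambda>i. {X i -` A \<inter> space M | A. A \<in> sets (M' i)}"]
  unfolding indep_vars_def2 by auto

lemma measurable_pair_count_space:
  fixes f :: "'a \<Rightarrow> 'b::countable" and g :: "'a \<Rightarrow> 'c::countable"
  assumes "f \<in> N \<rightarrow>\<^sub>M count_space UNIV" and "g \<in> N \<rightarrow>\<^sub>M count_space UNIV"
  shows "(\<lambda>x. (f x, g x)) \<in> N \<rightarrow>\<^sub>M count_space UNIV"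
proof -
  have "(\<lambda>x. (f x, g x)) \<in> N \<rightarrow>\<^sub>M count_space (UNIV::'b set) \<Otimes>\<^sub>M count_space (UNIV::'c set)"
    using assms by measurable
  then show ?thesis by (simp add: pair_measure_countable)
qed

lemma measurable_count_space_compose:
  "f \<in> N \<rightarrow>\<^sub>M count_space UNIV \<Longrightarrow> (\<lambda>x. h (f x)) \<in> N \<rightarrow>\<^sub>M count_space UNIV"
  by (rule measurable_compose) auto

lemma borel_measurable_count_space_compose:
  "f \<in> N \<rightarrow>\<^sub>M count_space UNIV \<Longrightarrow> (\<lambda>x. h (f x)) \<in> borel_measurable N"
  by (rule measurable_compose) auto

lemma nat_filt_inj_comp:
  assumes "inj g"
  shows "nat_filt M (\<lambda>k \<omega>. g (Y k \<omega>)) = nat_filt M Y"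
proof -
  have "{(\<lambda>\<omega>. g (Y j \<omega>)) -` A \<inter> space M | A. True} = {Y j -` A \<inter> space M | A. True}" for j
  proof safe
    fix A show "\<exists>B. (\<lambda>\<omega>. g (Y j \<omega>)) -` A \<inter> space M = Y j -` B \<inter> space M \<and> True"
      by (intro exI[of _ "g -` A"]) auto
  next
    fix A show "\<exists>B. Y j -` A \<inter> space M = (\<lambda>\<omega>. g (Y j \<omega>)) -` B \<inter> space M \<and> True"
      using assms by (intro exI[of _ "g ` A"]) (auto dest: injD)
  qed
  then show ?thesis unfolding nat_filt_def by simp
qed

lemma sqrt_divide_mult_self:
  fixes t a :: real
  assumes "a \<noteq> 0"
  shows "sqrt (t / a) * a = sgn a * sqrt (t * a)"
proof -
  have "t / a = (t * a) / a\<^sup>2" using assms by (simp add: power2_eq_square)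
  then show ?thesis using assms by (simp add: real_sqrt_divide sgn_if)
qed

lemma lambda_alpha_eq_r_alpha_mult:
  assumes "a1 * a2 \<noteq> 0"
  shows "lambda_alpha a1 a2 = r_alpha a1 a2 * of_real a2"
  using assms sqrt_divide_mult_self[of a2 a1] sqrt_divide_mult_self[of a2 "- a1"]
  unfolding lambda_alpha_def r_alpha_def by (auto simp flip: of_real_mult)

lemma r_alpha_squared:
  assumes "a1 * a2 \<noteq> 0"
  shows "(r_alpha a1 a2)\<^sup>2 = of_real (a1 / a2)"
proof (cases "a1 * a2 > 0")
  case True
  then have "a1 / a2 > 0" by (simp add: zero_less_divide_iff zero_less_mult_iff)
  then show ?thesis using True unfolding r_alpha_def by (simp flip: of_real_power)
next
  case False
  then have "a1 * a2 < 0" using assms by linarith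
  then have "a1 / a2 < 0" by (simp add: divide_less_0_iff mult_less_0_iff)
  then show ?thesis using False unfolding r_alpha_def by (simp add: power_mult_distrib flip: of_real_power)
qed

lemma lambda_alpha_mult_r_alpha:
  assumes "a1 * a2 \<noteq> 0"
  shows "lambda_alpha a1 a2 * r_alpha a1 a2 = of_real a1"
proof -
  have "lambda_alpha a1 a2 * r_alpha a1 a2 = (r_alpha a1 a2)\<^sup>2 * of_real a2"
    by (simp add: lambda_alpha_eq_r_alpha_mult[OF assms] power2_eq_square)
  also have "\<dots> = of_real a1" using assms by (simp add: r_alpha_squared del: of_real_divide flip: of_real_mult)
  finally show ?thesis .
qed

lemma norm_lambda_alpha: "norm (lambda_alpha a1 a2) = sqrt \<bar>a1 * a2\<bar>"
  by (cases "a2 = 0")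
     (auto simp: lambda_alpha_def norm_mult abs_mult sgn_if zero_less_mult_iff abs_if mult_less_0_iff)

section \<open>Running means\<close>

lemma one_minus_gam_eq_0_iff: "1 - gam z k = 0 \<longleftrightarrow> z = of_nat k"
proof -
  have "(of_nat k + 1 :: complex) \<noteq> 0" by (metis of_nat_Suc of_nat_eq_0_iff add.commute nat.distinct(1))
  then show ?thesis unfolding gam_def by (auto simp: field_simps)
qed

lemma bet_Suc: "1 \<le> n \<Longrightarrow> bet z (Suc n) = bet z n * (1 - gam z n)"
  unfolding bet_def by (simp add: prod.atLeastLessThan_Suc)

lemma bet_nonzero: "(\<And>k. 1 \<le> k \<Longrightarrow> z \<noteq> of_nat k) \<Longrightarrow> bet z n \<noteq> 0"
  using one_minus_gam_eq_0_iff[of z] unfolding bet_def by (auto simp: prod_zero_iff)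

lemma affine_recursion_closed_form:
  fixes m e :: "nat \<Rightarrow> complex"
  assumes z: "\<And>k. 1 \<le> k \<Longrightarrow> z \<noteq> of_nat k"
    and rec: "\<And>j. 1 \<le> j \<Longrightarrow> m (Suc j) = (1 - gam z j) * m j + gam z j * e (Suc j)"
    and "1 \<le> n"
  shows "m n = bet z n * (m 1 + (\<Sum>j=1..n-1. gam z j / bet z (j+1) * e (j+1)))"
  using \<open>1 \<le> n\<close>
proof (induction n rule: dec_induct)
  case base
  then show ?case by (simp add: bet_def)
next
  case (step n)
  have "m (Suc n) = (1 - gam z n) * m n + gam z n * e (Suc n)" by (rule rec[OF step.hyps(1)])
  also have "\<dots> = bet z (Suc n) * (m 1 + (\<Sum>j=1..n-1. gam z j / bet z (j+1) * e (j+1)))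
      + gam z n * e (Suc n)"
    using step by (simp add: bet_Suc algebra_simps)
  also have "\<dots> = bet z (Suc n) * (m 1 + (\<Sum>j=1..Suc n - 1. gam z j / bet z (j+1) * e (j+1)))"
    using step.hyps(1) bet_nonzero[OF z, of "Suc n"]
    by (cases n) (simp_all add: sum.cl_ivl_Suc field_simps)
  finally show ?case .
qed

lemma running_mean_step:
  fixes P w z N :: complex
  assumes "N \<noteq> 0" "N + 1 \<noteq> 0" "1 + z \<noteq> 0"
  shows "(P + w) / (N + 1) = (1 - (1 + z) / (N + 1)) * (P / N) + (1 + z) / (N + 1) * ((w + z * (P / N)) / (1 + z))"
proof -
  have "(1 + z) / (N + 1) * ((w + z * (P / N)) / (1 + z)) = (w + z * (P / N)) / (N + 1)"
    using assms(3) by simp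
  moreover have "1 - (1 + z) / (N + 1) = (N - z) / (N + 1)"
    using assms(2) by (simp add: field_simps)
  ultimately have "(1 - (1 + z) / (N + 1)) * (P / N) + (1 + z) / (N + 1) * ((w + z * (P / N)) / (1 + z))
      = ((N - z) * (P / N) + (w + z * (P / N))) / (N + 1)"
    by (simp add: add_divide_distrib)
  also have "(N - z) * (P / N) = P - z * (P / N)"
    using assms(1) by (simp add: field_simps)
  finally show ?thesis by simp
qed

lemma running_mean_closed_form:
  fixes w :: "nat \<Rightarrow> complex"
  defines "m \<equiv> \<lambda>n. (\<Sum>k=1..n. w k) / of_nat n"
  assumes z: "z \<noteq> -1" "\<And>k. 1 \<le> k \<Longrightarrow> z \<noteq> of_nat k" and "1 \<le> n"
  shows "m n = bet z n * (m 1 + (\<Sum>j=1..n-1. gam z j / bet z (j+1) * ((w (j+1) + z * m j) / (1 + z))))"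
proof -
  define e where "e j = (w j + z * m (j - 1)) / (1 + z)" for j
  have "m (Suc j) = (1 - gam z j) * m j + gam z j * e (Suc j)" if "1 \<le> j" for j
  proof -
    have "1 + z \<noteq> 0" using z(1) by (auto simp: add_eq_0_iff)
    moreover have "(of_nat j + 1 :: complex) \<noteq> 0"
      by (metis of_nat_Suc of_nat_eq_0_iff add.commute nat.distinct(1))
    moreover have "(of_nat j :: complex) \<noteq> 0" using that by simp
    moreover have "(\<Sum>k=1..Suc j. w k) = (\<Sum>k=1..j. w k) + w (Suc j)" by (simp add: sum.cl_ivl_Suc)
    ultimately show ?thesis
      using running_mean_step[of "of_nat j" z "\<Sum>k=1..j. w k" "w (Suc j)"]
      unfolding m_def e_def gam_def by (simp add: add.commute)
  qed
  from affine_recursion_closed_form[OF z(2) this \<open>1 \<le> n\<close>] show ?thesis by (simp add: e_def)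
qed

lemma centred_step_algebra:
  fixes A B P Q lam r N D :: complex
  assumes "N \<noteq> 0" "D \<noteq> 0"
  shows "(A - r * B + lam * ((P - r * Q) / N)) / D
    = 1 / D * A + - r / D * B - (lam * r / D * Q + - lam / D * P) / N"
  using assms by (simp add: field_simps)

lemma walk_induct:
  assumes "P 0" "P (Suc 0)" "\<And>m. (\<And>j. j \<le> Suc m \<Longrightarrow> P j) \<Longrightarrow> P (Suc (Suc m))"
  shows "P k"
proof (induction k rule: less_induct)
  case (less k)
  consider "k = 0" | "k = Suc 0" | m where "k = Suc (Suc m)" by (metis not0_implies_Suc)
  then show ?case using assms less by cases auto
qed

lemma walkX_Suc_Suc:
  "walkX a b xi1 xi2 u1 u2 (Suc (Suc m)) \<omega> =
    (sgnb (xi1 (Suc (Suc m)) \<omega>) * snd (walkX a b xi1 xi2 u1 u2 (min (u2 (Suc m) \<omega>) (Suc m)) \<omega>),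
     sgnb (xi2 (Suc (Suc m)) \<omega>) * fst (walkX a b xi1 xi2 u1 u2 (min (u1 (Suc m) \<omega>) (Suc m)) \<omega>))"
  by (simp add: walkX_def)

fun src_swap :: "src \<Rightarrow> src" where
  "src_swap (Xi1 n) = Xi2 n"
| "src_swap (Xi2 n) = Xi1 n"
| "src_swap (U1 n) = U2 n"
| "src_swap (U2 n) = U1 n"

lemma src_swap_src_swap [simp]: "src_swap (src_swap s) = s"
  by (cases s) simp_all

lemma inj_src_swap: "inj src_swap"
  by (rule injI) (metis src_swap_src_swap)

lemma image_src_swap_src_index: "src_swap ` src_index = src_index"
proof
  show sub: "src_swap ` src_index \<subseteq> src_index" by (auto simp: src_index_def)
  show "src_index \<subseteq> src_swap ` src_index" using image_mono[OF sub, of src_swap] by (simp add: image_image)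
qed

lemma src_var_swap: "src_var xi2 xi1 u2 u1 s = src_var xi1 xi2 u1 u2 (src_swap s)"
  by (cases s) (simp_all add: src_var_def)

lemma elephant_swap: "elephant b a x2 x1 v2 v1 k = prod.swap (elephant a b x1 x2 v1 v2 k)"
  by (induction a b x1 x2 v1 v2 k rule: elephant.induct) simp_all

lemma walkX_swap: "walkX b a xi2 xi1 u2 u1 = (\<lambda>k \<omega>. prod.swap (walkX a b xi1 xi2 u1 u2 k \<omega>))"
  unfolding walkX_def by (intro ext) (rule elephant_swap)

section \<open>Conditional means of the steps\<close>

locale two_elephant = prob_space M for M :: "'a measure" +
  fixes p1 p2 :: real and a b :: int
    and xi1 xi2 :: "nat \<Rightarrow> 'a \<Rightarrow> bool" and u1 u2 :: "nat \<Rightarrow> 'a \<Rightarrow> nat"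
  assumes p1: "0 \<le> p1" "p1 \<le> 1" and p2: "0 \<le> p2" "p2 \<le> 1"
    and initial_steps: "a \<in> {-1, 1}" "b \<in> {-1, 1}"
    and distr_xi1: "\<And>n. n \<ge> 2 \<Longrightarrow> distr M (count_space UNIV) (xi1 n) = measure_pmf (bernoulli_pmf p1)"
    and distr_xi2: "\<And>n. n \<ge> 2 \<Longrightarrow> distr M (count_space UNIV) (xi2 n) = measure_pmf (bernoulli_pmf p2)"
    and distr_u1: "\<And>n. n \<ge> 1 \<Longrightarrow> distr M (count_space UNIV) (u1 n) = measure_pmf (pmf_of_set {1..n})"
    and distr_u2: "\<And>n. n \<ge> 1 \<Longrightarrow> distr M (count_space UNIV) (u2 n) = measure_pmf (pmf_of_set {1..n})"
    and indep_sources: "indep_vars (\<lambda>_. count_space UNIV) (src_var xi1 xi2 u1 u2) src_index"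
begin

abbreviation "X \<equiv> walkX a b xi1 xi2 u1 u2"
abbreviation "F \<equiv> nat_filt M X"
abbreviation "X1 k \<omega> \<equiv> real_of_int (fst (X k \<omega>))"
abbreviation "X2 k \<omega> \<equiv> real_of_int (snd (X k \<omega>))"
abbreviation "S1 n \<omega> \<equiv> \<Sum>k=1..n. X1 k \<omega>"
abbreviation "S2 n \<omega> \<equiv> \<Sum>k=1..n. X2 k \<omega>"

definition source_events :: "src \<Rightarrow> 'a set set" where
  "source_events i = {src_var xi1 xi2 u1 u2 i -` A \<inter> space M | A. A \<in> sets (count_space UNIV)}"

definition sources :: "src set \<Rightarrow> 'a measure" where
  "sources K = sigma (space M) (\<Union>i\<in>K. source_events i)"

definition past_sources :: "nat \<Rightarrow> src set" where
  "past_sources n = {Xi1 m | m. 2 \<le> m \<and> m \<le> n} \<union> {Xi2 m | m. 2 \<le> m \<and> m \<le> n}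
        \<union> {U1 m | m. 1 \<le> m \<and> m < n} \<union> {U2 m | m. 1 \<le> m \<and> m < n}"

lemma past_sources_subset: "past_sources n \<subseteq> src_index"
  unfolding past_sources_def src_index_def by auto

lemma source_events_Pow: "(\<Union>i\<in>K. source_events i) \<subseteq> Pow (space M)"
  unfolding source_events_def by auto

lemma sets_sources: "sets (sources K) = sigma_sets (space M) (\<Union>i\<in>K. source_events i)"
  unfolding sources_def using source_events_Pow by (rule sets_measure_of)

lemma space_sources [simp]: "space (sources K) = space M"
  unfolding sources_def using source_events_Pow by (rule space_measure_of)

lemma sources_mono: "K \<subseteq> K' \<Longrightarrow> f \<in> sources K \<rightarrow>\<^sub>M N \<Longrightarrow> f \<in> sources K' \<rightarrow>\<^sub>M N"
  unfolding sources_def by (erule subsetD[OF measurable_mono1[OF source_events_Pow], rotated]) auto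

lemma subalgebra_sources: "K \<subseteq> src_index \<Longrightarrow> subalgebra M (sources K)"
proof -
  assume K: "K \<subseteq> src_index"
  have "source_events i \<subseteq> sets M" if "i \<in> src_index" for i
    using that indep_sources unfolding indep_vars_def2 source_events_def
    by (auto intro: measurable_sets)
  with K show ?thesis
    unfolding subalgebra_def sets_sources by (auto intro!: sets.sigma_sets_subset)
qed

lemma measurable_sources_imp_measurable:
  "K \<subseteq> src_index \<Longrightarrow> f \<in> sources K \<rightarrow>\<^sub>M N \<Longrightarrow> f \<in> M \<rightarrow>\<^sub>M N"
  using subalgebra_sources measurable_from_subalg by blast

lemma measurable_source:
  "i \<in> K \<Longrightarrow> src_var xi1 xi2 u1 u2 i \<in> sources K \<rightarrow>\<^sub>M count_space UNIV"
  by (rule measurableI) (auto simp: sets_sources source_events_def)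

lemma measurable_driving_variables:
  shows "Xi1 m \<in> K \<Longrightarrow> xi1 m \<in> sources K \<rightarrow>\<^sub>M count_space UNIV"
    and "Xi2 m \<in> K \<Longrightarrow> xi2 m \<in> sources K \<rightarrow>\<^sub>M count_space UNIV"
    and "U1 m \<in> K \<Longrightarrow> u1 m \<in> sources K \<rightarrow>\<^sub>M count_space UNIV"
    and "U2 m \<in> K \<Longrightarrow> u2 m \<in> sources K \<rightarrow>\<^sub>M count_space UNIV"
  using measurable_count_space_compose[OF measurable_source, of _ K projl]
    measurable_count_space_compose[OF measurable_source, of _ K projr]
  by (fastforce simp: src_var_def)+

lemma measurable_walk_past: "k \<le> n \<Longrightarrow> X k \<in> sources (past_sources n) \<rightarrow>\<^sub>M count_space UNIV"
proof (induction k rule: walk_induct)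
  case (3 m)
  then have IH: "\<And>j. j \<le> Suc m \<Longrightarrow> X j \<in> sources (past_sources n) \<rightarrow>\<^sub>M count_space UNIV"
    by simp
  have past: "Xi1 (Suc (Suc m)) \<in> past_sources n" "Xi2 (Suc (Suc m)) \<in> past_sources n"
    "U1 (Suc m) \<in> past_sources n" "U2 (Suc m) \<in> past_sources n"
    using "3.prems" unfolding past_sources_def by auto
  show ?case
    unfolding walkX_Suc_Suc[abs_def]
    by (rule measurable_compose_countable[OF _ measurable_driving_variables(2)[OF past(2)]],
        rule measurable_compose_countable[OF _ measurable_driving_variables(1)[OF past(1)]],
        rule measurable_compose_countable[OF _ measurable_driving_variables(4)[OF past(4)]],
        rule measurable_compose_countable[OF _ measurable_driving_variables(3)[OF past(3)]],
        rule measurable_pair_count_space; rule measurable_count_space_compose[OF IH]; simp)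
qed (simp_all add: walkX_def[abs_def])

lemma measurable_walk: "X k \<in> M \<rightarrow>\<^sub>M count_space UNIV"
  using measurable_sources_imp_measurable[OF past_sources_subset measurable_walk_past[of k k]] by simp

lemma abs_walk_le_1: "\<bar>fst (X k \<omega>)\<bar> \<le> 1 \<and> \<bar>snd (X k \<omega>)\<bar> \<le> 1"
proof (induction k rule: walk_induct)
  case (3 m)
  have "\<bar>sgnb c\<bar> = 1" for c by (simp add: sgnb_def)
  with "3.IH"[of "min (u1 (Suc m) \<omega>) (Suc m)"] "3.IH"[of "min (u2 (Suc m) \<omega>) (Suc m)"]
  show ?case by (simp add: walkX_Suc_Suc abs_mult)
qed (use initial_steps in \<open>auto simp: walkX_def\<close>)

lemma integrable_walk: "integrable M (X1 k)" "integrable M (X2 k)"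
  using borel_measurable_count_space_compose[OF measurable_walk[of k]] abs_walk_le_1[of k]
  by (auto intro!: integrable_const_bound[of _ 1] simp flip: of_int_abs)

lemma sets_filtration: "sets (F n) = sigma_sets (space M) (\<Union>j\<in>{1..n}. {X j -` A \<inter> space M | A. True})"
  unfolding nat_filt_def by (rule sets_measure_of) auto

lemma filtration_le_past: "sets (F n) \<subseteq> sets (sources (past_sources n))"
  unfolding sets_filtration
proof (rule sets.sigma_sets_subset')
  show "(\<Union>j\<in>{1..n}. {X j -` A \<inter> space M | A. True}) \<subseteq> sets (sources (past_sources n))"
    using measurable_sets[OF measurable_walk_past] by fastforce
qed (use sets.top[of "sources (past_sources n)"] in simp)

lemma space_filtration [simp]: "space (F n) = space M"
  unfolding nat_filt_def by (rule space_measure_of) auto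

lemma subalgebra_filtration: "subalgebra M (F n)"
  using filtration_le_past subalgebra_sources[OF past_sources_subset]
  unfolding subalgebra_def by auto

lemma measurable_walk_filtration: "1 \<le> j \<Longrightarrow> j \<le> n \<Longrightarrow> X j \<in> F n \<rightarrow>\<^sub>M count_space UNIV"
  by (rule measurableI) (auto simp: sets_filtration intro!: sigma_sets.Basic bexI[of _ j] exI)

lemma borel_measurable_walk_filtration:
  assumes "1 \<le> k" "k \<le> n"
  shows "X1 k \<in> borel_measurable (F n)" "X2 k \<in> borel_measurable (F n)"
  by (rule borel_measurable_count_space_compose[OF measurable_walk_filtration[OF assms]])+

lemma indep_var_disjoint_sources:
  fixes f g :: "'a \<Rightarrow> real"
  assumes K: "K1 \<subseteq> src_index" "K2 \<subseteq> src_index" "K1 \<inter> K2 = {}"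
    and f: "f \<in> borel_measurable (sources K1)" and g: "g \<in> borel_measurable (sources K2)"
  shows "indep_var borel f borel g"
  unfolding indep_var_eq
proof (intro conjI)
  show "random_variable borel f" "random_variable borel g"
    using measurable_sources_imp_measurable K f g by blast+
  let ?K = "case_bool K1 K2"
  have "indep_sets source_events src_index"
    using indep_sources unfolding indep_vars_def2 source_events_def[abs_def] by auto
  then have "indep_sets (\<lambda>j. sigma_sets (space M) (\<Union>i\<in>?K j. source_events i)) UNIV"
  proof (rule indep_sets_collect_sigma[OF indep_sets_mono_index, rotated])
    show "Int_stable (source_events i)" for i
    proof (rule Int_stableI)
      fix E1 E2 assume "E1 \<in> source_events i" "E2 \<in> source_events i"
      then obtain A B where "E1 = src_var xi1 xi2 u1 u2 i -` A \<inter> space M"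
        "E2 = src_var xi1 xi2 u1 u2 i -` B \<inter> space M"
        unfolding source_events_def by auto
      then have "E1 \<inter> E2 = src_var xi1 xi2 u1 u2 i -` (A \<inter> B) \<inter> space M" by auto
      then show "E1 \<inter> E2 \<in> source_events i"
        unfolding source_events_def by (intro CollectI exI[of _ "A \<inter> B"]) simp
    qed
    show "disjoint_family_on ?K UNIV"
      using K(3) by (auto simp: disjoint_family_on_def split: bool.split)
  qed (use K in \<open>auto split: bool.split_asm\<close>)
  then show "indep_set (sigma_sets (space M) {f -` A \<inter> space M |A. A \<in> sets borel})
     (sigma_sets (space M) {g -` A \<inter> space M |A. A \<in> sets borel})"
    unfolding indep_set_def
  proof (rule indep_sets_mono_sets)
    have "{f -` A \<inter> space M |A. A \<in> sets borel} \<subseteq> sigma_sets (space M) (\<Union>i\<in>K1. source_events i)"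
      "{g -` A \<inter> space M |A. A \<in> sets borel} \<subseteq> sigma_sets (space M) (\<Union>i\<in>K2. source_events i)"
      using measurable_sets[OF f] measurable_sets[OF g] unfolding sets_sources by auto
    from this(1)[THEN sigma_sets_mono] this(2)[THEN sigma_sets_mono]
    show "case_bool (sigma_sets (space M) {f -` A \<inter> space M |A. A \<in> sets borel})
        (sigma_sets (space M) {g -` A \<inter> space M |A. A \<in> sets borel}) j
      \<subseteq> sigma_sets (space M) (\<Union>i\<in>?K j. source_events i)" for j
      by (cases j) simp_all
  qed
qed

lemma measurable_xi1: "2 \<le> n \<Longrightarrow> xi1 n \<in> M \<rightarrow>\<^sub>M count_space UNIV"
  by (rule measurable_sources_imp_measurable[of "{Xi1 n}"])
     (auto simp: src_index_def intro: measurable_driving_variables)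

lemma measurable_u2: "1 \<le> n \<Longrightarrow> u2 n \<in> M \<rightarrow>\<^sub>M count_space UNIV"
  by (rule measurable_sources_imp_measurable[of "{U2 n}"])
     (auto simp: src_index_def intro: measurable_driving_variables)

lemma integral_sgnb_xi1: "2 \<le> n \<Longrightarrow> (\<integral>\<omega>. real_of_int (sgnb (xi1 n \<omega>)) \<partial>M) = 2 * p1 - 1"
  using integral_distr[OF measurable_xi1, of n "\<lambda>c. real_of_int (sgnb c)", symmetric]
  by (simp add: distr_xi1 sgnb_def p1)

lemma integral_u2_eq:
  "1 \<le> n \<Longrightarrow> k \<in> {1..n} \<Longrightarrow> (\<integral>\<omega>. (if u2 n \<omega> = k then 1 else 0 :: real) \<partial>M) = 1 / n"
  using integral_distr[OF measurable_u2, of n "\<lambda>c. if c = k then 1 else 0 :: real", symmetric]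
  by (simp add: distr_u2 integral_pmf_of_set)

lemma AE_u2_range:
  assumes "1 \<le> n" shows "AE \<omega> in M. u2 n \<omega> \<in> {1..n}"
proof (rule AE_distrD[OF measurable_u2[OF assms]])
  show "AE c in distr M (count_space UNIV) (u2 n). c \<in> {1..n}"
    unfolding distr_u2[OF assms] AE_measure_pmf_iff using assms by simp
qed

lemma walk_fst_Suc:
  assumes "u2 n \<omega> \<in> {1..n}"
  shows "fst (X (Suc n) \<omega>) = sgnb (xi1 (Suc n) \<omega>) * snd (X (u2 n \<omega>) \<omega>)"
proof -
  obtain m where "n = Suc m" using assms by (cases n) auto
  then show ?thesis using assms by (simp add: walkX_Suc_Suc min_def)
qed

lemma integral_coin_times_choice:
  fixes g :: "'a \<Rightarrow> real"
  assumes n: "1 \<le> n" and k: "k \<in> {1..n}"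
    and g: "g \<in> borel_measurable (sources (past_sources n))" "integrable M g"
  defines "h \<equiv> \<lambda>\<omega>. real_of_int (sgnb (xi1 (Suc n) \<omega>)) * ((if u2 n \<omega> = k then 1 else 0) * g \<omega>)"
  shows "integrable M h" and "integral\<^sup>L M h = (2 * p1 - 1) / n * integral\<^sup>L M g"
proof -
  define s where "s = (\<lambda>\<omega>. real_of_int (sgnb (xi1 (Suc n) \<omega>)))"
  define U where "U = (\<lambda>\<omega>. if u2 n \<omega> = k then 1 else 0 :: real)"
  have disjoint: "{Xi1 (Suc n)} \<inter> insert (U2 n) (past_sources n) = {}" "{U2 n} \<inter> past_sources n = {}"
    by (auto simp: past_sources_def)
  have blocks: "{Xi1 (Suc n)} \<subseteq> src_index" "{U2 n} \<subseteq> src_index" "insert (U2 n) (past_sources n) \<subseteq> src_index"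
    using n past_sources_subset by (auto simp: src_index_def)
  have s_meas: "s \<in> borel_measurable (sources {Xi1 (Suc n)})"
    unfolding s_def by (rule borel_measurable_count_space_compose[OF measurable_driving_variables(1)]) simp
  have U_meas: "U \<in> borel_measurable (sources {U2 n})"
    unfolding U_def by (rule borel_measurable_count_space_compose[OF measurable_driving_variables(4)]) simp
  have "U \<in> borel_measurable (sources (insert (U2 n) (past_sources n)))"
    "g \<in> borel_measurable (sources (insert (U2 n) (past_sources n)))"
    by (auto intro: sources_mono[OF _ U_meas] sources_mono[OF _ g(1)])
  then have Ug_meas: "(\<lambda>\<omega>. U \<omega> * g \<omega>) \<in> borel_measurable (sources (insert (U2 n) (past_sources n)))"
    by measurable
  have indep_Ug: "indep_var borel U borel g"
    by (rule indep_var_disjoint_sources[OF blocks(2) past_sources_subset disjoint(2) U_meas g(1)])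
  have indep_sUg: "indep_var borel s borel (\<lambda>\<omega>. U \<omega> * g \<omega>)"
    by (rule indep_var_disjoint_sources[OF blocks(1,3) disjoint(1) s_meas Ug_meas])
  have s_int: "integrable M s" and U_int: "integrable M U"
    using measurable_sources_imp_measurable[OF blocks(1) s_meas] measurable_sources_imp_measurable[OF blocks(2) U_meas]
    by (auto intro!: integrable_const_bound[of _ 1] simp: s_def U_def sgnb_def)
  have Ug_int: "integrable M (\<lambda>\<omega>. U \<omega> * g \<omega>)"
    by (rule indep_var_integrable[OF indep_Ug U_int g(2)])
  show "integrable M h"
    unfolding h_def using indep_var_integrable[OF indep_sUg s_int Ug_int] by (simp add: s_def U_def)
  have "integral\<^sup>L M h = integral\<^sup>L M s * (integral\<^sup>L M U * integral\<^sup>L M g)"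
    using indep_var_lebesgue_integral[OF indep_sUg s_int Ug_int] indep_var_lebesgue_integral[OF indep_Ug U_int g(2)]
    by (simp add: h_def s_def U_def)
  also have "\<dots> = (2 * p1 - 1) / n * integral\<^sup>L M g"
    using n k unfolding s_def U_def by (simp add: integral_sgnb_xi1 integral_u2_eq)
  finally show "integral\<^sup>L M h = (2 * p1 - 1) / n * integral\<^sup>L M g" .
qed

lemma integral_indicator_fst_step:
  assumes n: "1 \<le> n" and A: "A \<in> sets (F n)"
  shows "(\<integral>\<omega>. indicator A \<omega> * X1 (Suc n) \<omega> \<partial>M) = (2 * p1 - 1) / n * (\<integral>\<omega>. indicator A \<omega> * S2 n \<omega> \<partial>M)"
proof -
  define W where "W k = (\<lambda>\<omega>. indicator A \<omega> * X2 k \<omega>)" for k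
  define h where "h k = (\<lambda>\<omega>. real_of_int (sgnb (xi1 (Suc n) \<omega>)) * ((if u2 n \<omega> = k then 1 else 0) * W k \<omega>))" for k
  have A_M: "A \<in> sets M" using A subalgebra_filtration by (auto simp: subalgebra_def)
  have A_past: "A \<in> sets (sources (past_sources n))" using A filtration_le_past by blast
  have W_meas: "W k \<in> borel_measurable (sources (past_sources n))" if "k \<le> n" for k
    unfolding W_def using A_past measurable_walk_past[OF that]
    by (intro borel_measurable_times borel_measurable_indicator borel_measurable_count_space_compose)
  have W_int: "integrable M (W k)" for k
    unfolding W_def using integrable_mult_indicator[OF A_M integrable_walk(2)] by simp
  have h: "integrable M (h k)" "integral\<^sup>L M (h k) = (2 * p1 - 1) / n * integral\<^sup>L M (W k)"
    if "k \<in> {1..n}" for k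
    using integral_coin_times_choice[OF n that W_meas W_int] that unfolding h_def by auto
  have "AE \<omega> in M. indicator A \<omega> * X1 (Suc n) \<omega> = (\<Sum>k=1..n. h k \<omega>)"
    using AE_u2_range[OF n]
  proof eventually_elim
    case (elim \<omega>)
    have "(\<Sum>k=1..n. h k \<omega>) = (\<Sum>k\<in>{1..n}. if k = u2 n \<omega> then sgnb (xi1 (Suc n) \<omega>) * W k \<omega> else 0)"
      by (rule sum.cong) (auto simp: h_def)
    also have "\<dots> = sgnb (xi1 (Suc n) \<omega>) * W (u2 n \<omega>) \<omega>" using elim by simp
    finally show ?case using walk_fst_Suc[OF elim] by (simp add: W_def)
  qed
  then have "(\<integral>\<omega>. indicator A \<omega> * X1 (Suc n) \<omega> \<partial>M) = (\<integral>\<omega>. (\<Sum>k=1..n. h k \<omega>) \<partial>M)"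
    using A_M measurable_walk[of "Suc n"] h(1)
    by (intro integral_cong_AE) (auto intro!: borel_measurable_times borel_measurable_count_space_compose)
  also have "\<dots> = (\<Sum>k=1..n. (2 * p1 - 1) / n * integral\<^sup>L M (W k))"
    using h by (simp add: Bochner_Integration.integral_sum)
  also have "\<dots> = (2 * p1 - 1) / n * (\<integral>\<omega>. (\<Sum>k=1..n. W k \<omega>) \<partial>M)"
    using W_int by (simp add: Bochner_Integration.integral_sum sum_distrib_left)
  finally show ?thesis by (simp add: W_def sum_distrib_left)
qed

lemma two_elephant_swap: "two_elephant M p2 p1 b a xi2 xi1 u2 u1"
proof -
  have "indep_vars (\<lambda>_. count_space UNIV) (\<lambda>s. src_var xi1 xi2 u1 u2 (src_swap s)) src_index"
    using indep_vars_reindex[of src_swap src_index "\<lambda>_. count_space UNIV" "src_var xi1 xi2 u1 u2"]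
      indep_sources inj_on_subset[OF inj_src_swap subset_UNIV]
    by (simp add: image_src_swap_src_index)
  then show ?thesis
    by unfold_locales (use p1 p2 initial_steps distr_xi1 distr_xi2 distr_u1 distr_u2 in
        \<open>simp_all add: src_var_swap[of xi2 xi1 u2 u1, abs_def]\<close>)
qed

lemma integral_indicator_snd_step:
  assumes "1 \<le> n" and "A \<in> sets (F n)"
  shows "(\<integral>\<omega>. indicator A \<omega> * X2 (Suc n) \<omega> \<partial>M) = (2 * p2 - 1) / n * (\<integral>\<omega>. indicator A \<omega> * S1 n \<omega> \<partial>M)"
  using two_elephant.integral_indicator_fst_step[OF two_elephant_swap, of n A] assms
  by (simp add: walkX_swap[of b a xi2 xi1 u2 u1] nat_filt_inj_comp)

lemma integral_indicator_centred_step: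
  fixes d1 d2 :: real
  assumes n: "1 \<le> n" and A: "A \<in> sets (F n)"
  shows "(\<integral>\<omega>. indicator A \<omega> * (d1 * X1 (Suc n) \<omega> + d2 * X2 (Suc n) \<omega>
            - (d1 * (2 * p1 - 1) * S2 n \<omega> + d2 * (2 * p2 - 1) * S1 n \<omega>) / n) \<partial>M) = 0"
proof -
  define f1 where "f1 = (\<lambda>\<omega>. indicator A \<omega> * X1 (Suc n) \<omega>)"
  define f2 where "f2 = (\<lambda>\<omega>. indicator A \<omega> * X2 (Suc n) \<omega>)"
  define g1 where "g1 = (\<lambda>\<omega>. indicator A \<omega> * S1 n \<omega>)"
  define g2 where "g2 = (\<lambda>\<omega>. indicator A \<omega> * S2 n \<omega>)"
  have "A \<in> sets M" using A subalgebra_filtration by (auto simp: subalgebra_def)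
  then have int_steps: "integrable M (\<lambda>\<omega>. indicator A \<omega> * X1 k \<omega>)" "integrable M (\<lambda>\<omega>. indicator A \<omega> * X2 k \<omega>)"
    for k
    using integrable_mult_indicator[OF _ integrable_walk(1)] integrable_mult_indicator[OF _ integrable_walk(2)]
    by auto
  have int: "integrable M f1" "integrable M f2" "integrable M g1" "integrable M g2"
    unfolding f1_def f2_def g1_def g2_def sum_distrib_left
    by (intro Bochner_Integration.integrable_sum int_steps)+
  have integrand: "(\<lambda>\<omega>. indicator A \<omega> * (d1 * X1 (Suc n) \<omega> + d2 * X2 (Suc n) \<omega>
            - (d1 * (2 * p1 - 1) * S2 n \<omega> + d2 * (2 * p2 - 1) * S1 n \<omega>) / n))
      = (\<lambda>\<omega>. d1 * f1 \<omega> + d2 * f2 \<omega> - (d1 * (2 * p1 - 1) * g2 \<omega> + d2 * (2 * p2 - 1) * g1 \<omega>) / n)"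
    unfolding f1_def f2_def g1_def g2_def by (simp add: algebra_simps add_divide_distrib diff_divide_distrib)
  have "(\<integral>\<omega>. indicator A \<omega> * (d1 * X1 (Suc n) \<omega> + d2 * X2 (Suc n) \<omega>
            - (d1 * (2 * p1 - 1) * S2 n \<omega> + d2 * (2 * p2 - 1) * S1 n \<omega>) / n) \<partial>M)
      = d1 * integral\<^sup>L M f1 + d2 * integral\<^sup>L M f2
        - (d1 * (2 * p1 - 1) * integral\<^sup>L M g2 + d2 * (2 * p2 - 1) * integral\<^sup>L M g1) / n"
    unfolding integrand using int by simp
  also have "\<dots> = 0"
    using n by (simp add: integral_indicator_fst_step[OF assms, folded f1_def g2_def]
      integral_indicator_snd_step[OF assms, folded f2_def g1_def] field_simps)
  finally show ?thesis .
qed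

lemma mds_centred_step:
  fixes c d :: complex and e :: "nat \<Rightarrow> 'a \<Rightarrow> complex"
  assumes e: "\<And>n \<omega>. 1 \<le> n \<Longrightarrow> e (Suc n) \<omega> = c * of_real (X1 (Suc n) \<omega>) + d * of_real (X2 (Suc n) \<omega>)
      - (c * of_real (2 * p1 - 1) * of_real (S2 n \<omega>) + d * of_real (2 * p2 - 1) * of_real (S1 n \<omega>)) / n"
  shows "mds M F e"
  unfolding mds_def
proof (intro allI impI conjI)
  fix j :: nat assume j: "1 \<le> j"
  have e_j: "e (j + 1) = (\<lambda>\<omega>. c * of_real (X1 (Suc j) \<omega>) + d * of_real (X2 (Suc j) \<omega>)
      - (c * of_real (2 * p1 - 1) * of_real (S2 j \<omega>) + d * of_real (2 * p2 - 1) * of_real (S1 j \<omega>)) / j)"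
    using e[OF j] by auto
  show "e (j + 1) \<in> borel_measurable (F (j + 1))"
    unfolding e_j using j
    by (intro borel_measurable_add borel_measurable_diff borel_measurable_times borel_measurable_divide
        borel_measurable_const measurable_compose[OF _ borel_measurable_of_real] borel_measurable_sum
        borel_measurable_walk_filtration) auto
  show e_int: "integrable M (e (j + 1))"
    unfolding e_j using integrable_walk
    by (intro Bochner_Integration.integrable_diff Bochner_Integration.integrable_add integrable_divide
        integrable_mult_right integrable_of_real Bochner_Integration.integrable_sum) auto
  interpret filtration_j: finite_measure_subalgebra M "F j"
    by unfold_locales (rule subalgebra_filtration)
  have "AE \<omega> in M. real_cond_exp M (F j) (\<lambda>\<omega>. part (e (j + 1) \<omega>)) \<omega> = 0"
    if part: "part = Re \<or> part = Im" for part
  proof (rule filtration_j.real_cond_exp_charact)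
    have "part (e (j + 1) \<omega>) = part c * X1 (Suc j) \<omega> + part d * X2 (Suc j) \<omega>
      - (part c * (2 * p1 - 1) * S2 j \<omega> + part d * (2 * p2 - 1) * S1 j \<omega>) / j" for \<omega>
      using part unfolding e_j by auto
    then show "(\<integral>\<omega>\<in>A. part (e (j + 1) \<omega>) \<partial>M) = (\<integral>\<omega>\<in>A. 0 \<partial>M)" if "A \<in> sets (F j)" for A
      using integral_indicator_centred_step[OF j that] by (simp add: set_lebesgue_integral_def)
    show "integrable M (\<lambda>\<omega>. part (e (j + 1) \<omega>))"
      using part integrable_Re[OF e_int] integrable_Im[OF e_int] by auto
  qed simp_all
  then show "AE \<omega> in M. real_cond_exp M (F j) (\<lambda>\<omega>. Re (e (j + 1) \<omega>)) \<omega> = 0"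
    "AE \<omega> in M. real_cond_exp M (F j) (\<lambda>\<omega>. Im (e (j + 1) \<omega>)) \<omega> = 0"
    by blast+
qed

lemma walk_mean_decomposition:
  fixes lam r :: complex
  assumes lam_r: "lam * r = of_real (2 * p1 - 1)" and lam_eq: "lam = r * of_real (2 * p2 - 1)"
    and lam: "norm lam \<le> 1" "lam \<noteq> 1" "lam \<noteq> -1"
  defines "x \<equiv> \<lambda>n \<omega>. ((\<Sum>k=1..n. of_int (fst (X k \<omega>))) - r * (\<Sum>k=1..n. of_int (snd (X k \<omega>)))) / of_nat n"
  defines "eps \<equiv> \<lambda>m \<omega>. (of_int (fst (X m \<omega>)) - r * of_int (snd (X m \<omega>)) + lam * x (m - 1) \<omega>) / (1 + lam)"
  shows "1 \<le> n \<Longrightarrow> x n \<omega> = bet lam n * (x 1 \<omega> + (\<Sum>j=1..n-1. gam lam j / bet lam (j+1) * eps (j+1) \<omega>))"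
    and "mds M F eps"
proof -
  assume n: "1 \<le> n"
  define w where "w k = of_int (fst (X k \<omega>)) - r * of_int (snd (X k \<omega>))" for k
  have x_mean: "x m \<omega> = (\<Sum>k=1..m. w k) / of_nat m" for m
    by (simp add: x_def w_def sum_subtractf sum_distrib_left)
  have "lam \<noteq> of_nat k" if "1 \<le> k" for k
  proof
    assume "lam = of_nat k"
    with lam(1,2) that show False by simp
  qed
  from running_mean_closed_form[OF lam(3) this n, of w]
  show "x n \<omega> = bet lam n * (x 1 \<omega> + (\<Sum>j=1..n-1. gam lam j / bet lam (j+1) * eps (j+1) \<omega>))"
    by (simp add: x_mean eps_def w_def)
next
  have "1 + lam \<noteq> 0" using lam(3) by (auto simp: add_eq_0_iff)
  have c1: "1 / (1 + lam) * of_real (2 * p1 - 1) = lam * r / (1 + lam)"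
    using lam_r by simp
  have c2: "- r / (1 + lam) * of_real (2 * p2 - 1) = - lam / (1 + lam)"
    using lam_eq by simp
  show "mds M F eps"
  proof (rule mds_centred_step[where c = "1 / (1 + lam)" and d = "- r / (1 + lam)"])
    fix n :: nat and \<omega> assume "1 \<le> n"
    then have "(of_nat n :: complex) \<noteq> 0" by simp
    then show "eps (Suc n) \<omega> = 1 / (1 + lam) * of_real (X1 (Suc n) \<omega>) + - r / (1 + lam) * of_real (X2 (Suc n) \<omega>)
      - (1 / (1 + lam) * of_real (2 * p1 - 1) * of_real (S2 n \<omega>)
         + - r / (1 + lam) * of_real (2 * p2 - 1) * of_real (S1 n \<omega>)) / n"
      unfolding c1 c2 eps_def x_def of_real_sum of_real_of_int_eq diff_Suc_1
      using \<open>1 + lam \<noteq> 0\<close> by (rule centred_step_algebra)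
  qed
qed

end

theorem lemma3p1:
  fixes M :: "'a measure"
    and p1 p2 :: real
    and a b :: int
    and xi1 xi2 :: "nat \<Rightarrow> 'a \<Rightarrow> bool"
    and u1 u2 :: "nat \<Rightarrow> 'a \<Rightarrow> nat"
  defines "al1 \<equiv> 2 * p1 - 1"
    and "al2 \<equiv> 2 * p2 - 1"
  defines "lam \<equiv> lambda_alpha al1 al2"
    and "r \<equiv> r_alpha al1 al2"
  defines "X \<equiv> walkX a b xi1 xi2 u1 u2"
  defines "S1 \<equiv> (\<lambda>n \<omega>. \<Sum>k=1..n. of_int (fst (X k \<omega>)) :: complex)"
    and "S2 \<equiv> (\<lambda>n \<omega>. \<Sum>k=1..n. of_int (snd (X k \<omega>)) :: complex)"
  defines "x \<equiv> (\<lambda>n \<omega>. (S1 n \<omega> - r * S2 n \<omega>) / of_nat n)"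
    and "y \<equiv> (\<lambda>n \<omega>. (S1 n \<omega> + r * S2 n \<omega>) / of_nat n)"
  defines "epsx \<equiv> (\<lambda>m \<omega>. (of_int (fst (X m \<omega>)) - r * of_int (snd (X m \<omega>)) + lam * x (m - 1) \<omega>) / (1 + lam))"
    and "epsy \<equiv> (\<lambda>m \<omega>. (of_int (fst (X m \<omega>)) + r * of_int (snd (X m \<omega>)) - lam * y (m - 1) \<omega>) / (1 - lam))"
  defines "F \<equiv> nat_filt M X"
  assumes "prob_space M"
    and "0 \<le> p1" "p1 \<le> 1" "0 \<le> p2" "p2 \<le> 1"
    and "a \<in> {-1, 1}" "b \<in> {-1, 1}"
    and "\<And>n. n \<ge> 2 \<Longrightarrow> distr M (count_space UNIV) (xi1 n) = measure_pmf (bernoulli_pmf p1)"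
    and "\<And>n. n \<ge> 2 \<Longrightarrow> distr M (count_space UNIV) (xi2 n) = measure_pmf (bernoulli_pmf p2)"
    and "\<And>n. n \<ge> 1 \<Longrightarrow> distr M (count_space UNIV) (u1 n) = measure_pmf (pmf_of_set {1..n})"
    and "\<And>n. n \<ge> 1 \<Longrightarrow> distr M (count_space UNIV) (u2 n) = measure_pmf (pmf_of_set {1..n})"
    and "prob_space.indep_vars M (\<lambda>_. count_space UNIV) (src_var xi1 xi2 u1 u2) src_index"
    and "al1 * al2 \<noteq> 0"
    and "lam \<noteq> 1" "lam \<noteq> -1"
  shows "(\<forall>n\<ge>1. \<forall>\<omega>\<in>space M.
            x n \<omega> = bet lam n * (x 1 \<omega> + (\<Sum>j=1..n-1. gam lam j / bet lam (j+1) * epsx (j+1) \<omega>)) \<and>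
            y n \<omega> = bet (-lam) n * (y 1 \<omega> + (\<Sum>j=1..n-1. gam (-lam) j / bet (-lam) (j+1) * epsy (j+1) \<omega>)))
         \<and> mds M F epsx \<and> mds M F epsy"
proof -
  interpret two_elephant M p1 p2 a b xi1 xi2 u1 u2
    by (rule two_elephant.intro[OF assms(13) two_elephant_axioms.intro]) (use assms(14-24) in simp_all)
  have "\<bar>al1\<bar> \<le> 1" "\<bar>al2\<bar> \<le> 1"
    using assms(14-17) unfolding al1_def al2_def by auto
  then have lam_norm: "norm lam \<le> 1" "norm (- lam) \<le> 1"
    unfolding lam_def by (simp_all add: norm_lambda_alpha abs_mult mult_le_one)
  have lam_r: "lam * r = of_real (2 * p1 - 1)" "- lam * - r = of_real (2 * p1 - 1)"
    using lambda_alpha_mult_r_alpha[OF assms(25)] unfolding lam_def r_def al1_def al2_def by simp_all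
  have lam_eq: "lam = r * of_real (2 * p2 - 1)" "- lam = - r * of_real (2 * p2 - 1)"
    using lambda_alpha_eq_r_alpha_mult[OF assms(25)] unfolding lam_def r_def al1_def al2_def by simp_all
  have lam_ne: "- lam \<noteq> 1" "- lam \<noteq> -1"
    using assms(26,27) by (auto simp: minus_equation_iff)
  note x_decomposition = walk_mean_decomposition[OF lam_r(1) lam_eq(1) lam_norm(1) assms(26,27)]
  note y_decomposition = walk_mean_decomposition[OF lam_r(2) lam_eq(2) lam_norm(2) lam_ne]
  have "x n \<omega> = bet lam n * (x 1 \<omega> + (\<Sum>j=1..n-1. gam lam j / bet lam (j+1) * epsx (j+1) \<omega>))"
    and "y n \<omega> = bet (-lam) n * (y 1 \<omega> + (\<Sum>j=1..n-1. gam (-lam) j / bet (-lam) (j+1) * epsy (j+1) \<omega>))"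
    if "1 \<le> n" for n \<omega>
    using x_decomposition(1)[OF that] y_decomposition(1)[OF that]
    unfolding x_def y_def epsx_def epsy_def S1_def S2_def X_def
    by (simp_all only: mult_minus_left diff_minus_eq_add add_uminus_conv_diff)
  moreover have "mds M F epsx" "mds M F epsy"
    using x_decomposition(2) y_decomposition(2)
    unfolding F_def x_def y_def epsx_def epsy_def S1_def S2_def X_def
    by (simp_all only: mult_minus_left diff_minus_eq_add add_uminus_conv_diff)
  ultimately show ?thesis by blast
qed

end
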